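(* If $Q$ is a saturated cover on a finite modular lattice $M$, then $\langle Q\rangle$ is a saturated transfer system on $M$.
   Context: A lattice $M$ is modular if $a\le b$ implies $a\vee(x\wedge b)=(a\vee x)\wedge b$. A transfer system on a finite lattice $(P,\le)$ is a partial order $R$ refining $\le$ closed under restriction: $x\,R\,z$ and $y\le z$ imply $(x\wedge y)\,R\,y$; it is saturated if $x\,R\,y$, $y\le z$ and $x\,R\,z$ imply $y\,R\,z$. For a set $Q$ of pairs $(x,y)$ with $x\le y$, $\langle Q\rangle$ is the intersection of all transfer systems containing $Q$. A covering diamond is a quadruple $x,y,x\wedge y,x\vee y$ with $x\ne y$ such that $x\vee y$ covers $x$ and $y$ and both cover $x\wedge y$. A saturated cover on $M$ is a set $Q$ of covering relations of $M$ such that (1) for all $x,y$, if $x\,Q\,(x\vee y)$ then $(x\wedge y)\,Q\,y$; (2) for every covering diamond, if three of its four covering relations lie in $Q$, so does the fourth. *)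

theory Defs
  imports Main
begin

definition modular_lattice :: "('a::lattice) itself \<Rightarrow> bool" where
  "modular_lattice _ \<longleftrightarrow> (\<forall>a b x::'a. a \<le> b \<longrightarrow> sup a (inf x b) = inf (sup a x) b)"

definition transfer_system :: "('a::lattice) rel \<Rightarrow> bool" where
  "transfer_system R \<longleftrightarrow>
     (\<forall>x. (x, x) \<in> R) \<and>
     antisym R \<and> trans R \<and>
     (\<forall>x y. (x, y) \<in> R \<longrightarrow> x \<le> y) \<and>
     (\<forall>x y z. (x, z) \<in> R \<and> y \<le> z \<longrightarrow> (inf x y, y) \<in> R)"

definition saturated :: "('a::lattice) rel \<Rightarrow> bool" where
  "saturated R \<longleftrightarrow> (\<forall>x y z. (x, y) \<in> R \<and> y \<le> z \<and> (x, z) \<in> R \<longrightarrow> (y, z) \<in> R)"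

definition generated_transfer :: "('a::lattice) rel \<Rightarrow> 'a rel" where
  "generated_transfer Q = \<Inter> {R. transfer_system R \<and> Q \<subseteq> R}"

definition covers :: "'a::order \<Rightarrow> 'a \<Rightarrow> bool" where
  "covers x y \<longleftrightarrow> x < y \<and> \<not> (\<exists>z. x < z \<and> z < y)"

definition covering_diamond :: "'a::lattice \<Rightarrow> 'a \<Rightarrow> bool" where
  "covering_diamond x y \<longleftrightarrow> x \<noteq> y \<and> covers x (sup x y) \<and> covers y (sup x y) \<and>
     covers (inf x y) x \<and> covers (inf x y) y"

definition saturated_cover :: "('a::lattice) rel \<Rightarrow> bool" where
  "saturated_cover Q \<longleftrightarrow>
     (\<forall>x y. (x, y) \<in> Q \<longrightarrow> covers x y) \<and>
     (\<forall>x y. (x, sup x y) \<in> Q \<longrightarrow> (inf x y, y) \<in> Q) \<and>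
     (\<forall>x y. covering_diamond x y \<longrightarrow>
        card ({(inf x y, x), (inf x y, y), (x, sup x y), (y, sup x y)} \<inter> Q) \<ge> 3 \<longrightarrow>
        {(inf x y, x), (inf x y, y), (x, sup x y), (y, sup x y)} \<subseteq> Q)"

end

theory Submission
  imports Defs
begin

text \<open>Condition (1) of a saturated cover propagates along chains of covers, so the
reflexive-transitive closure \<open>Q\<^sup>*\<close> is already closed under restriction and hence is
\<open>\<langle>Q\<rangle>\<close>. For saturation it suffices to cancel a single cover \<open>a Q b\<close> from the left of
\<open>a Q\<^sup>* z\<close> with \<open>b \<le> z\<close>: if the chain starts with a different cover \<open>a Q c\<close>, then by
modularity \<open>b, c, b \<squnion> c\<close> span a covering diamond over \<open>a\<close>, restriction puts
\<open>c Q (b \<squnion> c)\<close>, and condition (2) supplies the fourth edge \<open>b Q (b \<squnion> c)\<close>, after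
which induction along the chain applies.\<close>

lemma covers_cases:
  assumes "covers a b" "a \<le> c" "c \<le> b"
  shows "c = a \<or> c = b"
  using assms unfolding covers_def by (metis order.not_eq_order_implies_strict)

lemma covers_sup_eq:
  fixes a b y :: "'a::lattice"
  assumes "covers a b" "y \<le> b" "\<not> y \<le> a"
  shows "sup a y = b"
proof -
  have "a \<le> sup a y" "sup a y \<le> b" using assms by (auto simp: covers_def)
  moreover have "sup a y \<noteq> a" using assms(3) by (metis sup.cobounded2)
  ultimately show ?thesis using covers_cases[OF assms(1)] by blast
qed

lemma covers_distinct_not_le:
  assumes "covers a b" "covers a c" "b \<noteq> c"
  shows "\<not> c \<le> b"
  using assms covers_cases[OF assms(1)] unfolding covers_def by force

lemma covers_inf_eq:
  fixes a b c :: "'a::lattice"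
  assumes "covers a b" "covers a c" "b \<noteq> c"
  shows "inf b c = a"
proof -
  have "a \<le> inf b c" using assms(1,2) unfolding covers_def by auto
  moreover have "inf b c \<noteq> b"
    using covers_distinct_not_le[OF assms(2,1)] assms(3) by (metis inf.orderI)
  moreover have "inf b c \<le> b" by simp
  ultimately show ?thesis using covers_cases[OF assms(1)] by blast
qed

lemma modular_covers_sup:
  fixes a b c :: "'a::lattice"
  assumes modular: "modular_lattice TYPE('a)"
    and ab: "covers a b" and ac: "covers a c" and "b \<noteq> c"
  shows "covers b (sup b c)"
proof -
  have "\<not> c \<le> b" using covers_distinct_not_le[OF ab ac \<open>b \<noteq> c\<close>] .
  then have "b < sup b c" by (metis le_sup_iff order.not_eq_order_implies_strict sup_ge1)
  moreover have "\<not> (b < w \<and> w < sup b c)" for w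
  proof
    assume w: "b < w \<and> w < sup b c"
    have "sup b (inf c w) = inf (sup b c) w"
      using modular w unfolding modular_lattice_def by auto
    also have "\<dots> = w" using w by (metis inf.absorb2 less_imp_le)
    finally have sup_eq: "sup b (inf c w) = w" .
    have "a \<le> inf c w" using ab ac w unfolding covers_def by auto
    then have "inf c w = a \<or> inf c w = c" using covers_cases[OF ac] by simp
    then show False
    proof
      assume "inf c w = a"
      then have "w = b" using sup_eq ab unfolding covers_def by (metis sup.absorb1 less_imp_le)
      then show False using w by simp
    next
      assume "inf c w = c"
      then have "sup b c \<le> w" using w by (metis inf.orderI le_sup_iff less_imp_le)
      then show False using w by (simp add: leD)
    qed
  qed
  ultimately show ?thesis unfolding covers_def by blast
qed

lemma modular_covering_diamond:
  fixes a b c :: "'a::lattice"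
  assumes "modular_lattice TYPE('a)" "covers a b" "covers a c" "b \<noteq> c"
  shows "covering_diamond b c"
  using assms modular_covers_sup[of a b c] modular_covers_sup[of a c b]
    covers_inf_eq[of a b c]
  unfolding covering_diamond_def by (simp add: sup_commute)

lemma rtrancl_le:
  fixes Q :: "'a::order rel"
  assumes "\<And>x y. (x, y) \<in> Q \<Longrightarrow> x \<le> y" "(x, y) \<in> Q\<^sup>*"
  shows "x \<le> y"
  using assms(2)
proof induction
  case (step y z)
  then show ?case using assms(1)[of y z] by (meson order.trans)
qed simp

lemma rtrancl_subset_transfer_system:
  assumes "transfer_system R" "Q \<subseteq> R"
  shows "Q\<^sup>* \<subseteq> R"
proof clarify
  have "trans R" using assms(1) unfolding transfer_system_def by simp
  fix x y assume "(x, y) \<in> Q\<^sup>*"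
  then show "(x, y) \<in> R"
  proof (induction rule: rtrancl_induct)
    case (step y z)
    then show ?case using \<open>trans R\<close> assms(2) by (meson subsetD transD)
  qed (use assms(1) in \<open>simp add: transfer_system_def\<close>)
qed

lemma generated_transfer_eq_rtrancl:
  assumes "transfer_system (Q\<^sup>*)"
  shows "generated_transfer Q = Q\<^sup>*"
proof
  show "generated_transfer Q \<subseteq> Q\<^sup>*"
    unfolding generated_transfer_def using assms by (blast intro: Inter_lower)
  show "Q\<^sup>* \<subseteq> generated_transfer Q"
    unfolding generated_transfer_def using rtrancl_subset_transfer_system by blast
qed

lemma saturated_cover_covers:
  "saturated_cover Q \<Longrightarrow> (x, y) \<in> Q \<Longrightarrow> covers x y"
  unfolding saturated_cover_def by blast

lemma saturated_cover_rtrancl_le: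
  assumes sc: "saturated_cover Q" and "(x, y) \<in> Q\<^sup>*"
  shows "x \<le> y"
proof -
  have "u \<le> v" if "(u, v) \<in> Q" for u v
    using saturated_cover_covers[OF sc that] by (simp add: covers_def less_imp_le)
  then show ?thesis using rtrancl_le assms(2) by blast
qed

lemma saturated_cover_rtrancl_covers:
  assumes sc: "saturated_cover Q" and "(x, y) \<in> Q\<^sup>*" "covers x y"
  shows "(x, y) \<in> Q"
  using assms(2)
proof (cases rule: converse_rtranclE)
  case base
  then show ?thesis using \<open>covers x y\<close> by (simp add: covers_def)
next
  case (step w)
  have "x \<le> w" "w \<le> y"
    using saturated_cover_rtrancl_le[OF sc] step by (auto intro: r_into_rtrancl)
  moreover have "w \<noteq> x" using saturated_cover_covers[OF sc step(1)] by (auto simp: covers_def)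
  ultimately have "w = y" using covers_cases[OF \<open>covers x y\<close>] by blast
  then show ?thesis using step by simp
qed

lemma saturated_cover_restrict_step:
  fixes Q :: "'a::lattice rel"
  assumes sc: "saturated_cover Q" and "(w, z) \<in> Q" "y \<le> z"
  shows "(inf w y, y) \<in> Q\<^sup>*"
proof (cases "y \<le> w")
  case True
  then show ?thesis by (simp add: inf_absorb2)
next
  case False
  then have "sup w y = z"
    using covers_sup_eq saturated_cover_covers[OF sc assms(2)] assms(3) by blast
  then show ?thesis using sc assms(2) unfolding saturated_cover_def by auto
qed

lemma saturated_cover_rtrancl_restrict:
  fixes Q :: "'a::lattice rel"
  assumes sc: "saturated_cover Q" and "(x, z) \<in> Q\<^sup>*" "y \<le> z"
  shows "(inf x y, y) \<in> Q\<^sup>*"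
  using assms(2,3)
proof (induction arbitrary: y rule: rtrancl_induct)
  case base
  then show ?case by (simp add: inf_absorb2)
next
  case (step w z)
  have "x \<le> w" using saturated_cover_rtrancl_le[OF sc step(1)] .
  then have "inf x (inf w y) = inf x y" by (metis inf.absorb1 inf.assoc)
  then show ?case
    using step.IH[of "inf w y"] saturated_cover_restrict_step[OF sc step(2,4)]
    by (metis inf_le1 rtrancl_trans)
qed

lemma transfer_system_rtrancl_saturated_cover:
  assumes sc: "saturated_cover (Q :: 'a::lattice rel)"
  shows "transfer_system (Q\<^sup>*)"
proof -
  have "antisym (Q\<^sup>*)"
    by (rule antisymI) (meson saturated_cover_rtrancl_le[OF sc] order.antisym)
  then show ?thesis
    unfolding transfer_system_def
    using saturated_cover_rtrancl_le[OF sc] saturated_cover_rtrancl_restrict[OF sc]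
    by (blast intro: trans_rtrancl)
qed

lemma saturated_cover_complete_diamond:
  fixes Q :: "'a::lattice rel"
  assumes sc: "saturated_cover Q" and diamond: "covering_diamond b c"
    and "(inf b c, b) \<in> Q" "(inf b c, c) \<in> Q" "(c, sup b c) \<in> Q"
  shows "(b, sup b c) \<in> Q"
proof -
  define S where "S = {(inf b c, b), (inf b c, c), (b, sup b c), (c, sup b c)}"
  have "b \<noteq> c" "inf b c \<noteq> c" using diamond unfolding covering_diamond_def covers_def by auto
  then have "card {(inf b c, b), (inf b c, c), (c, sup b c)} = 3" by auto
  moreover have "{(inf b c, b), (inf b c, c), (c, sup b c)} \<subseteq> S \<inter> Q"
    using assms(3-5) unfolding S_def by auto
  moreover have "finite (S \<inter> Q)" unfolding S_def by simp
  ultimately have "card (S \<inter> Q) \<ge> 3" by (metis card_mono)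
  then have "S \<subseteq> Q" using sc diamond unfolding saturated_cover_def S_def by blast
  then show ?thesis unfolding S_def by simp
qed

lemma saturated_cover_rtrancl_cancel_cover:
  fixes Q :: "'a::lattice rel"
  assumes modular: "modular_lattice TYPE('a)" and sc: "saturated_cover Q"
    and "(a, z) \<in> Q\<^sup>*" "(a, b) \<in> Q" "b \<le> z"
  shows "(b, z) \<in> Q\<^sup>*"
  using assms(3-5)
proof (induction arbitrary: b rule: converse_rtrancl_induct)
  case base
  then show ?case using saturated_cover_covers[OF sc base(1)] by (meson covers_def leD)
next
  case (step a c)
  show ?case
  proof (cases "b = c")
    case True
    then show ?thesis using step by simp
  next
    case False
    have ab: "covers a b" and ac: "covers a c"
      using saturated_cover_covers[OF sc] step by auto
    have diamond: "covering_diamond b c" using modular_covering_diamond[OF modular ab ac False] .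
    have inf_bc: "inf b c = a" using covers_inf_eq[OF ab ac False] .
    have below_z: "sup b c \<le> z" using saturated_cover_rtrancl_le[OF sc step(2)] step(5) by simp
    have "(c, sup b c) \<in> Q\<^sup>*"
      using saturated_cover_rtrancl_restrict[OF sc step(2) below_z] by (simp add: inf_absorb1)
    then have c_top: "(c, sup b c) \<in> Q"
      using diamond saturated_cover_rtrancl_covers[OF sc]
      unfolding covering_diamond_def by (simp add: sup_commute)
    have "(b, sup b c) \<in> Q"
      using saturated_cover_complete_diamond[OF sc diamond] inf_bc step(1,4) c_top by simp
    then show ?thesis using step.IH[OF c_top below_z] by (meson converse_rtrancl_into_rtrancl)
  qed
qed

lemma saturated_rtrancl_saturated_cover:
  fixes Q :: "'a::lattice rel"
  assumes modular: "modular_lattice TYPE('a)" and sc: "saturated_cover Q"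
  shows "saturated (Q\<^sup>*)"
  unfolding saturated_def
proof (intro allI impI, elim conjE)
  fix x y z
  assume "(x, y) \<in> Q\<^sup>*" "y \<le> z" "(x, z) \<in> Q\<^sup>*"
  then show "(y, z) \<in> Q\<^sup>*"
  proof (induction rule: converse_rtrancl_induct)
    case (step x x')
    have "x' \<le> z" using saturated_cover_rtrancl_le[OF sc step(2)] step(4) by simp
    then show ?case
      using step saturated_cover_rtrancl_cancel_cover[OF modular sc step(5,1)] by simp
  qed simp
qed

theorem proposition3p11:
  fixes Q :: "('a::{finite, lattice}) rel"
  assumes "modular_lattice TYPE('a)"
    and "saturated_cover Q"
  shows "transfer_system (generated_transfer Q) \<and> saturated (generated_transfer Q)"
proof -
  have "transfer_system (Q\<^sup>*)" using transfer_system_rtrancl_saturated_cover[OF assms(2)] .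
  moreover have "saturated (Q\<^sup>*)" using saturated_rtrancl_saturated_cover[OF assms] .
  ultimately show ?thesis using generated_transfer_eq_rtrancl[of Q] by simp
qed

end
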